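(* Let $A$ be a real $n\times n$ matrix, let $\mathbf{y}$ be a symmetric Nash equilibrium of the bimatrix game $(A,A^T)$ (i.e., $(\mathbf{y},\mathbf{y})$ is a Nash equilibrium), and let $D$ be an $n\times n$ diagonal matrix with all diagonal entries positive. Then there exists a probability vector $\mathbf{x}\in\mathbb{R}^n$ such that $(\mathbf{x},\mathbf{y})$ is a Nash equilibrium of the bimatrix game $(A,D)$.
   Context: A bimatrix game $(A,B)$ with $n\times n$ matrices: players choose probability vectors $\mathbf{x},\mathbf{y}\in\mathbb{R}^n$, payoffs $\mathbf{x}^TA\mathbf{y}$ (first player) and $\mathbf{x}^TB\mathbf{y}$ (second player); a Nash equilibrium is a profile where no player gains by unilateral deviation. *)

theory Defs
  imports "HOL-Analysis.Analysis"
begin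

definition prob_vec :: "real ^ 'n::finite \<Rightarrow> bool" where
  "prob_vec x \<longleftrightarrow> (\<forall>i. 0 \<le> x $ i) \<and> (\<Sum>i\<in>UNIV. x $ i) = 1"

definition payoff :: "real ^ 'n::finite \<Rightarrow> real ^ 'n ^ 'n \<Rightarrow> real ^ 'n \<Rightarrow> real" where
  "payoff x M y = x \<bullet> (M *v y)"

definition nash_eq :: "real ^ 'n::finite ^ 'n \<Rightarrow> real ^ 'n ^ 'n \<Rightarrow> real ^ 'n \<Rightarrow> real ^ 'n \<Rightarrow> bool" where
  "nash_eq A B x y \<longleftrightarrow> prob_vec x \<and> prob_vec y \<and>
     (\<forall>x'. prob_vec x' \<longrightarrow> payoff x' A y \<le> payoff x A y) \<and>
     (\<forall>y'. prob_vec y' \<longrightarrow> payoff x B y' \<le> payoff x B y)"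

end

theory Submission
  imports Defs
begin

text \<open>Let \<open>S\<close> be the support of \<open>y\<close>. Since \<open>y\<close> is a best response to itself in \<open>A\<close>, every pure
  strategy in \<open>S\<close> earns the maximal payoff against \<open>y\<close>, so any mixed strategy supported in \<open>S\<close>
  is a best response to \<open>y\<close>. Take \<open>x\<^sub>i\<close> proportional to \<open>1 / D\<^sub>i\<^sub>i\<close> on \<open>S\<close>: then every pure
  strategy in \<open>S\<close> earns the same positive payoff against \<open>x\<close> in \<open>D\<close> and every other one earns
  nothing, so \<open>y\<close> is in turn a best response to \<open>x\<close>.\<close>

definition best_response :: "real ^ 'n::finite ^ 'n \<Rightarrow> real ^ 'n \<Rightarrow> real ^ 'n \<Rightarrow> bool" where
  "best_response M y x \<longleftrightarrow> prob_vec x \<and> (\<forall>x'. prob_vec x' \<longrightarrow> payoff x' M y \<le> payoff x M y)"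

lemma payoff_eq_sum: "payoff x M y = (\<Sum>i\<in>UNIV. x $ i * (M *v y) $ i)"
  unfolding payoff_def inner_vec_def by simp

lemma payoff_transpose: "payoff x M y = payoff y (transpose M) x"
  unfolding payoff_def by (metis dot_lmul_matrix inner_commute transpose_matrix_vector)

lemma nash_eq_iff_best_responses:
  "nash_eq A B x y \<longleftrightarrow> best_response A y x \<and> best_response (transpose B) x y"
  unfolding nash_eq_def best_response_def by (auto simp: payoff_transpose[of x B])

lemma payoff_le_if_components_le:
  assumes "prob_vec x" and "\<And>i. (M *v y) $ i \<le> v"
  shows "payoff x M y \<le> v"
proof -
  have "payoff x M y \<le> (\<Sum>i\<in>UNIV. x $ i * v)"
    unfolding payoff_eq_sum using assms unfolding prob_vec_def
    by (intro sum_mono mult_left_mono) auto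
  also have "\<dots> = v"
    using assms(1) unfolding prob_vec_def by (simp add: sum_distrib_right[symmetric])
  finally show ?thesis .
qed

lemma payoff_eq_if_components_eq_on_support:
  assumes "prob_vec x" and "\<And>i. x $ i \<noteq> 0 \<Longrightarrow> (M *v y) $ i = v"
  shows "payoff x M y = v"
proof -
  have "payoff x M y = (\<Sum>i\<in>UNIV. x $ i * v)"
    unfolding payoff_eq_sum by (rule sum.cong) (auto dest: assms(2))
  also have "\<dots> = v"
    using assms(1) unfolding prob_vec_def by (simp add: sum_distrib_right[symmetric])
  finally show ?thesis .
qed

lemma best_response_if_support_maximal:
  assumes "prob_vec x" and "\<And>i. (M *v y) $ i \<le> v"
    and "\<And>i. x $ i \<noteq> 0 \<Longrightarrow> (M *v y) $ i = v"
  shows "best_response M y x"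
  unfolding best_response_def
  using assms payoff_le_if_components_le payoff_eq_if_components_eq_on_support by metis

lemma prob_vec_axis: "prob_vec (axis i 1 :: real ^ 'n::finite)"
  unfolding prob_vec_def by (simp add: axis_def)

lemma payoff_axis: "payoff (axis i 1) M y = (M *v y) $ i"
  unfolding payoff_eq_sum by (simp add: axis_def if_distrib[of "\<lambda>t. t * _"] cong: if_cong)

lemma best_response_component_le:
  assumes "best_response M y x"
  shows "(M *v y) $ i \<le> payoff x M y"
  using assms prob_vec_axis payoff_axis unfolding best_response_def by metis

text \<open>The payoff is a convex combination of components that are all at most the payoff itself,
  so every component carrying positive weight attains it.\<close>
lemma best_response_component_eq_on_support:
  assumes br: "best_response M y x" and "x $ i \<noteq> 0"
  shows "(M *v y) $ i = payoff x M y"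
proof -
  let ?v = "payoff x M y" and ?w = "M *v y"
  have x: "prob_vec x" using br unfolding best_response_def by simp
  have le: "\<And>j. ?w $ j \<le> ?v" using best_response_component_le[OF br] .
  have "(\<Sum>j\<in>UNIV. x $ j * (?v - ?w $ j)) = (\<Sum>j\<in>UNIV. x $ j) * ?v - ?v"
    unfolding right_diff_distrib sum_subtractf sum_distrib_right payoff_eq_sum ..
  also have "\<dots> = 0" using x unfolding prob_vec_def by simp
  finally have "\<forall>j\<in>UNIV. x $ j * (?v - ?w $ j) = 0"
    using sum_nonneg_eq_0_iff[of UNIV "\<lambda>j. x $ j * (?v - ?w $ j)"] x le
    unfolding prob_vec_def by simp
  with \<open>x $ i \<noteq> 0\<close> show ?thesis by force
qed

lemma diagonal_matrix_vector_mult: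
  fixes D :: "'a::semiring_1 ^ 'n::finite ^ 'n"
  assumes "\<forall>i j. i \<noteq> j \<longrightarrow> D $ i $ j = 0"
  shows "(D *v y) $ i = D $ i $ i * y $ i"
proof -
  have "(D *v y) $ i = (\<Sum>j\<in>UNIV. D $ i $ j * y $ j)"
    by (simp add: matrix_vector_mult_def)
  also have "\<dots> = (\<Sum>j\<in>{i}. D $ i $ j * y $ j)"
    by (rule sum.mono_neutral_right) (use assms in auto)
  finally show ?thesis by simp
qed

definition inverse_weights :: "('n::finite \<Rightarrow> real) \<Rightarrow> 'n set \<Rightarrow> real ^ 'n" where
  "inverse_weights d S = (\<chi> i. if i \<in> S then inverse (d i * (\<Sum>j\<in>S. inverse (d j))) else 0)"

lemma
  assumes "S \<noteq> {}" and "\<And>i. 0 < d i"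
  shows prob_vec_inverse_weights: "prob_vec (inverse_weights d S)"
    and weighted_inverse_weights:
      "i \<in> S \<Longrightarrow> d i * inverse_weights d S $ i = inverse (\<Sum>j\<in>S. inverse (d j))"
proof -
  let ?s = "\<Sum>j\<in>S. inverse (d j)"
  have "0 < ?s" using assms by (intro sum_pos) auto
  have "(\<Sum>i\<in>UNIV. inverse_weights d S $ i) = (\<Sum>i\<in>S. inverse (d i) * inverse ?s)"
    by (subst sum.mono_neutral_right[of UNIV S]) (auto simp: inverse_weights_def mult.commute)
  also have "\<dots> = 1" using \<open>0 < ?s\<close> by (simp add: sum_distrib_right[symmetric])
  finally show "prob_vec (inverse_weights d S)"
    using assms \<open>0 < ?s\<close> unfolding prob_vec_def by (simp add: inverse_weights_def less_imp_le)
  show "i \<in> S \<Longrightarrow> d i * inverse_weights d S $ i = inverse ?s"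
    using assms(2)[of i] by (simp add: inverse_weights_def field_simps)
qed

theorem theoremA3:
  fixes A D :: "real ^ 'n::finite ^ 'n" and y :: "real ^ 'n"
  assumes "nash_eq A (transpose A) y y"
    and "\<forall>i j. i \<noteq> j \<longrightarrow> D $ i $ j = 0"
    and "\<forall>i. 0 < D $ i $ i"
  shows "\<exists>x. prob_vec x \<and> nash_eq A D x y"
proof -
  define S where "S = {i. y $ i \<noteq> 0}"
  define x where "x = inverse_weights (\<lambda>i. D $ i $ i) S"
  define c where "c = inverse (\<Sum>j\<in>S. inverse (D $ j $ j))"
  have yy: "best_response A y y" and y: "prob_vec y"
    using assms(1) unfolding nash_eq_iff_best_responses best_response_def by auto
  have "S \<noteq> {}" using y unfolding prob_vec_def S_def by force
  then have x: "prob_vec x" unfolding x_def using assms(3) by (intro prob_vec_inverse_weights) auto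
  have "best_response A y x"
    using best_response_component_le[OF yy] best_response_component_eq_on_support[OF yy]
    by (intro best_response_if_support_maximal[OF x])
      (auto simp: x_def inverse_weights_def S_def split: if_splits)
  moreover have "(transpose D *v x) $ i = (if i \<in> S then c else 0)" for i
    using diagonal_matrix_vector_mult[of "transpose D" x i] assms(2,3) \<open>S \<noteq> {}\<close>
      weighted_inverse_weights[of S "\<lambda>i. D $ i $ i" i]
    by (auto simp: transpose_def x_def c_def inverse_weights_def)
  moreover have "0 \<le> c"
    unfolding c_def using assms(3) by (simp add: sum_nonneg less_imp_le)
  ultimately have "best_response (transpose D) x y"
    by (intro best_response_if_support_maximal[OF y]) (auto simp: S_def)
  with x show ?thesis
    using \<open>best_response A y x\<close> nash_eq_iff_best_responses by blast
qed

end
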